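(* There is a continuous function $\mathcal{G}:\mathrm{PrTr}_2\to\mathbf{K}$ such that for every $T\in\mathrm{PrTr}_2$, $\mathcal{G}(T)$ is the closed offspring of $T$ determined by some compliant family $(D_t)_{t\in T}$, and for every $x\in[T]$: if $x\in\mathcal{N}$ then $\mathcal{O}_{\mathcal{G}(T)}(\overline{x})=1$, and if $x\notin\mathcal{N}$ then $\mathcal{D}_{\mathcal{G}(T)}(\overline{x})\in\{0,1\}$.
   Context: $2^{\omega}$ is the Cantor space; $N_s=\{x\in2^\omega:s\subset x\}$; $\mu$ is the coin-tossing measure, $\mu(N_s)=2^{-\mathrm{lh}(s)}$. For measurable $A$, $\mathcal{D}_A(z)=\lim_n\mu(A\cap N_{z\restriction n})/\mu(N_{z\restriction n})$ when it exists, and $\mathcal{O}_A(z)$ is the limsup minus the liminf of those ratios. $A$ is dualistic if $\mathcal{D}_A(z)$ exists and lies in $\{0,1\}$ for all $z$. $\mathcal{N}=\{y\in2^\omega:y(n)=1\text{ for infinitely many }n\}$. $\mathrm{PrTr}_2$ is the Polish space of pruned trees on $\{0,1\}$ (nonempty, closed under initial segments, every node has a proper extension), as a subspace of $2^{(2^{<\omega})}$; $[T]$ is the set of branches. $\mathbf{K}$ is the space of compact subsets of $2^\omega$ with the Vietoris topology. Stretch: $\overline{s}=s(0)^{(1)}{}^\frown s(1)^{(2)}{}^\frown s(2)^{(3)}\cdots$ ($s(j)$ repeated $j+1$ times). $\mathrm{Fl}(n)=2^{n+1}\setminus\{0^{(n+1)},1^{(n+1)}\}$. A family $(D_t)_{t\in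 T}$ is compliant if each $D_t$ is dualistic, $\emptyset\neq D_t\neq2^\omega$, and $\mu(\operatorname{Int}D_t)=\mu(\operatorname{Cl}D_t)$; its closed offspring is $\{\overline{x}:x\in[T]\}\cup\bigcup\{\overline{t}^\frown a^\frown\operatorname{Cl}D_t:t\in T,\ a\in\mathrm{Fl}(\mathrm{lh}\,t)\}$. *)

theory Defs
  imports "HOL-Probability.Probability"
begin

definition cantor_top :: "(nat \<Rightarrow> bool) topology" where
  "cantor_top = product_topology (\<lambda>_. discrete_topology (UNIV :: bool set)) UNIV"

definition restr :: "(nat \<Rightarrow> bool) \<Rightarrow> nat \<Rightarrow> bool list" where
  "restr z n = map z [0..<n]"

definition cyl :: "bool list \<Rightarrow> (nat \<Rightarrow> bool) set" where
  "cyl s = {x. restr x (length s) = s}"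

definition cantor_M :: "(nat \<Rightarrow> bool) measure" where
  "cantor_M = PiM UNIV (\<lambda>_. measure_pmf (bernoulli_pmf (1/2)))"

definition mu :: "(nat \<Rightarrow> bool) set \<Rightarrow> real" where
  "mu A = measure cantor_M A"

definition dens_ratio :: "(nat \<Rightarrow> bool) set \<Rightarrow> (nat \<Rightarrow> bool) \<Rightarrow> nat \<Rightarrow> real" where
  "dens_ratio A z n = mu (A \<inter> cyl (restr z n)) / mu (cyl (restr z n))"

definition density_is :: "(nat \<Rightarrow> bool) set \<Rightarrow> (nat \<Rightarrow> bool) \<Rightarrow> real \<Rightarrow> bool" where
  "density_is A z d \<longleftrightarrow> dens_ratio A z \<longlonglongrightarrow> d"

definition osc :: "(nat \<Rightarrow> bool) set \<Rightarrow> (nat \<Rightarrow> bool) \<Rightarrow> ereal" where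
  "osc A z = limsup (\<lambda>n. ereal (dens_ratio A z n)) - liminf (\<lambda>n. ereal (dens_ratio A z n))"

definition dualistic :: "(nat \<Rightarrow> bool) set \<Rightarrow> bool" where
  "dualistic A \<longleftrightarrow> A \<in> sets cantor_M \<and> (\<forall>z. \<exists>d\<in>{0,1}. density_is A z d)"

definition NN :: "(nat \<Rightarrow> bool) set" where
  "NN = {y. infinite {n. y n}}"

text \<open>2^(2^<omega): characteristic functions of sets of finite binary sequences,
  with the product topology.  A tree T is identified with its node set {s. T s}.\<close>

definition tree_space_top :: "(bool list \<Rightarrow> bool) topology" where
  "tree_space_top = product_topology (\<lambda>_. discrete_topology (UNIV :: bool set)) UNIV"

definition pruned_tree :: "(bool list \<Rightarrow> bool) \<Rightarrow> bool" where
  "pruned_tree T \<longleftrightarrow> (\<exists>s. T s)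
     \<and> (\<forall>s n. T s \<longrightarrow> T (take n s))
     \<and> (\<forall>s. T s \<longrightarrow> (\<exists>u. T u \<and> strict_prefix s u))"

definition PrTr2 :: "(bool list \<Rightarrow> bool) topology" where
  "PrTr2 = subtopology tree_space_top {T. pruned_tree T}"

definition branches :: "(bool list \<Rightarrow> bool) \<Rightarrow> (nat \<Rightarrow> bool) set" where
  "branches T = {x. \<forall>n. T (restr x n)}"

definition vietoris :: "(nat \<Rightarrow> bool) set topology" where
  "vietoris = subtopology
     (topology_generated_by
        ({{K. K \<subseteq> U} | U. openin cantor_top U} \<union> {{K. K \<inter> U \<noteq> {}} | U. openin cantor_top U}))
     {K. compactin cantor_top K}"

definition stretch_list :: "bool list \<Rightarrow> bool list" where
  "stretch_list s = concat (map (\<lambda>j. replicate (j + 1) (s ! j)) [0..<length s])"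

text \<open>index j of the block containing position k (block j has length j+1)\<close>
definition block_of :: "nat \<Rightarrow> nat" where
  "block_of k = (LEAST j. k < (j + 1) * (j + 2) div 2)"

definition stretch :: "(nat \<Rightarrow> bool) \<Rightarrow> (nat \<Rightarrow> bool)" where
  "stretch x = (\<lambda>k. x (block_of k))"

definition Fl :: "nat \<Rightarrow> bool list set" where
  "Fl n = {a. length a = n + 1} - {replicate (n + 1) False, replicate (n + 1) True}"

definition lconc :: "bool list \<Rightarrow> (nat \<Rightarrow> bool) \<Rightarrow> (nat \<Rightarrow> bool)" where
  "lconc u x = (\<lambda>i. if i < length u then u ! i else x (i - length u))"

definition compliant :: "(bool list \<Rightarrow> bool) \<Rightarrow> (bool list \<Rightarrow> (nat \<Rightarrow> bool) set) \<Rightarrow> bool" where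
  "compliant T D \<longleftrightarrow> (\<forall>t. T t \<longrightarrow>
      dualistic (D t) \<and> D t \<noteq> {} \<and> D t \<noteq> UNIV
      \<and> mu (cantor_top interior_of (D t)) = mu (cantor_top closure_of (D t)))"

definition closed_offspring ::
  "(bool list \<Rightarrow> bool) \<Rightarrow> (bool list \<Rightarrow> (nat \<Rightarrow> bool) set) \<Rightarrow> (nat \<Rightarrow> bool) set" where
  "closed_offspring T D =
     stretch ` branches T \<union>
     (\<Union>{lconc (stretch_list t @ a) ` (cantor_top closure_of (D t)) | t a. T t \<and> a \<in> Fl (length t)})"

end

(*
  Take D_t to be the complement of the all-zero sequence when t contains an odd number of
  ones, and the all-zero sequence alone otherwise; its closure is the whole space or a single
  point.  In the closed offspring G(T), the cylinder of a stretched node t of length m is split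
  by the next block of m + 1 bits: the two constant blocks (measure 2^-m of the cylinder) lead
  to deeper levels, and every flag carries a copy of the closure of D_t.  Hence the relative
  measure of G(T) there is within 2^-m of 1 or of 0, according to the parity of t.  Along a
  branch with infinitely many ones the parity changes infinitely often, so the density
  oscillates between 0 and 1; with finitely many ones the parity is eventually constant, and a
  geometric estimate of the points leaving the stretched branch at a deeper level makes the
  density converge.  Continuity holds because the part of G(T) seen at precision N depends only
  on the nodes of T of length at most N + 1.
*)
theory Submission
  imports Defs
begin

lemma restr_nth: "i < n \<Longrightarrow> restr y n ! i = y i"
  unfolding restr_def by simp

lemma length_restr[simp]: "length (restr y n) = n"
  unfolding restr_def by simp

lemma restr_Suc: "restr x (Suc m) = restr x m @ [x m]"
  unfolding restr_def by simp

lemma mem_cyl_iff: "y \<in> cyl s \<longleftrightarrow> (\<forall>i<length s. y i = s ! i)"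
proof -
  have "y \<in> cyl s \<longleftrightarrow> restr y (length s) = s" unfolding cyl_def by simp
  also have "\<dots> \<longleftrightarrow> (\<forall>i<length s. y i = s ! i)"
    by (simp add: list_eq_iff_nth_eq restr_nth)
  finally show ?thesis .
qed

lemma mem_cyl_iff_restr: "y \<in> cyl u \<longleftrightarrow> restr y (length u) = u"
  unfolding cyl_def by simp

lemma mem_cyl_restr_iff: "z \<in> cyl (restr y n) \<longleftrightarrow> (\<forall>i<n. z i = y i)"
  by (simp add: mem_cyl_iff restr_nth)

lemma in_cyl_restr_self[simp]: "y \<in> cyl (restr y n)"
  by (simp add: mem_cyl_restr_iff)

lemma cyl_restr_le: "z \<in> cyl (restr y n) \<Longrightarrow> k \<le> n \<Longrightarrow> z \<in> cyl (restr y k)"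
  unfolding mem_cyl_restr_iff by auto

lemma mem_cyl_restr_commute: "z \<in> cyl (restr y n) \<longleftrightarrow> y \<in> cyl (restr z n)"
  by (auto simp: mem_cyl_restr_iff)

lemma cyl_restr_sym: "z \<in> cyl (restr y n) \<Longrightarrow> cyl (restr z n) = cyl (restr y n)"
  unfolding set_eq_iff mem_cyl_restr_iff by auto

lemma cyl_restr_mono:
  assumes "y \<in> cyl u" "y' \<in> cyl (restr y n)" "length u \<le> n" shows "y' \<in> cyl u"
proof -
  have "\<forall>i<n. y' i = y i" using assms(2) by (simp only: mem_cyl_restr_iff)
  then show ?thesis using assms(1,3) unfolding mem_cyl_iff by auto
qed

lemma restr_eq_take_if_cyl: "y \<in> cyl u \<Longrightarrow> k \<le> length u \<Longrightarrow> restr y k = take k u"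
  by (rule nth_equalityI) (auto simp: mem_cyl_iff restr_nth)

definition seq_shift :: "nat \<Rightarrow> (nat \<Rightarrow> bool) \<Rightarrow> (nat \<Rightarrow> bool)" where
  "seq_shift n y = (\<lambda>i. y (i + n))"

lemma restr_add: "restr y (a + b) = restr y a @ restr (seq_shift a y) b"
proof (rule nth_equalityI)
  show "length (restr y (a + b)) = length (restr y a @ restr (seq_shift a y) b)" by simp
  fix i assume "i < length (restr y (a + b))"
  then have i: "i < a + b" by simp
  show "restr y (a + b) ! i = (restr y a @ restr (seq_shift a y) b) ! i"
  proof (cases "i < a")
    case True then show ?thesis using i by (simp add: restr_nth nth_append)
  next
    case False
    then have "i - a + a = i" by simp
    then show ?thesis using i False by (simp add: restr_nth nth_append seq_shift_def)
  qed
qed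

lemma mem_cyl_append_iff: "y \<in> cyl (u @ v) \<longleftrightarrow> y \<in> cyl u \<and> seq_shift (length u) y \<in> cyl v"
proof -
  have "restr y (length (u @ v)) = restr y (length u) @ restr (seq_shift (length u) y) (length v)"
    by (simp add: restr_add)
  then show ?thesis unfolding cyl_def by simp
qed

lemma seq_shift_lconc[simp]: "seq_shift (length u) (lconc u z) = z"
  unfolding seq_shift_def lconc_def by simp

lemma lconc_in_cyl: "lconc u z \<in> cyl u"
  unfolding mem_cyl_iff lconc_def by simp

lemma lconc_seq_shift: "y \<in> cyl u \<Longrightarrow> lconc u (seq_shift (length u) y) = y"
  unfolding lconc_def seq_shift_def mem_cyl_iff by (auto simp: fun_eq_iff)

lemma cyl_restr_ex_neq: "\<exists>z\<in>cyl (restr y n). z \<noteq> y"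
proof
  show "y(n := \<not> y n) \<in> cyl (restr y n)" by (simp add: mem_cyl_restr_iff)
  show "y(n := \<not> y n) \<noteq> y" by (metis fun_upd_same)
qed

lemma topspace_cantor_top[simp]: "topspace cantor_top = UNIV"
  unfolding cantor_top_def by simp

lemma openin_cantor_top_PiE:
  "openin cantor_top U \<longleftrightarrow>
    (\<forall>x\<in>U. \<exists>V. finite {i. V i \<noteq> UNIV} \<and> x \<in> Pi\<^sub>E UNIV V \<and> Pi\<^sub>E UNIV V \<subseteq> U)"
  unfolding cantor_top_def openin_product_topology_alt
  by (simp only: topspace_discrete_topology openin_discrete_topology subset_UNIV simp_thms ball_UNIV UNIV_I)

lemma cyl_restr_eq_PiE: "cyl (restr y n) = Pi\<^sub>E UNIV (\<lambda>i. if i < n then {y i} else UNIV)"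
  by (auto simp: mem_cyl_restr_iff PiE_iff split: if_split_asm)

lemma cyl_restr_subset_PiE:
  assumes "finite {i. V i \<noteq> UNIV}" "y \<in> Pi\<^sub>E UNIV V"
  shows "\<exists>n. cyl (restr y n) \<subseteq> Pi\<^sub>E UNIV V"
proof -
  obtain n where n: "{i. V i \<noteq> UNIV} \<subseteq> {..<n}" using finite_nat_bounded[OF assms(1)] by blast
  have "z i \<in> V i" if "z \<in> cyl (restr y n)" for z i
  proof (cases "i < n")
    case True
    then show ?thesis using that assms(2) by (simp add: mem_cyl_restr_iff PiE_iff)
  next
    case False
    then show ?thesis using n by auto
  qed
  then show ?thesis by (auto simp: PiE_iff)
qed

lemma openin_cantor_top_iff:
  "openin cantor_top U \<longleftrightarrow> (\<forall>y\<in>U. \<exists>n. cyl (restr y n) \<subseteq> U)"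
proof
  assume U: "openin cantor_top U"
  show "\<forall>y\<in>U. \<exists>n. cyl (restr y n) \<subseteq> U"
  proof
    fix y assume "y \<in> U"
    then obtain V where V: "finite {i. V i \<noteq> UNIV}" "y \<in> Pi\<^sub>E UNIV V" "Pi\<^sub>E UNIV V \<subseteq> U"
      using U unfolding openin_cantor_top_PiE by blast
    then show "\<exists>n. cyl (restr y n) \<subseteq> U" using cyl_restr_subset_PiE[OF V(1,2)] by blast
  qed
next
  assume H: "\<forall>y\<in>U. \<exists>n. cyl (restr y n) \<subseteq> U"
  show "openin cantor_top U"
    unfolding openin_cantor_top_PiE
  proof
    fix y assume "y \<in> U"
    then obtain n where n: "cyl (restr y n) \<subseteq> U" using H by blast
    define V where "V i = (if i < n then {y i} else UNIV)" for i
    have "finite {i. V i \<noteq> UNIV}" by (rule finite_subset[of _ "{..<n}"]) (auto simp: V_def)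
    moreover have "Pi\<^sub>E UNIV V = cyl (restr y n)" unfolding V_def cyl_restr_eq_PiE ..
    ultimately show "\<exists>V. finite {i. V i \<noteq> UNIV} \<and> y \<in> Pi\<^sub>E UNIV V \<and> Pi\<^sub>E UNIV V \<subseteq> U"
      using n in_cyl_restr_self by metis
  qed
qed

lemma openin_cyl_restr: "openin cantor_top (cyl (restr y k))"
  unfolding openin_cantor_top_iff using cyl_restr_sym by blast

lemma compact_space_cantor_top: "compact_space cantor_top"
  unfolding cantor_top_def compact_space_product_topology
  by (simp add: compact_space_discrete_topology)

lemma closedin_cantor_singleton: "closedin cantor_top {p}"
proof -
  have "openin cantor_top (UNIV - {p})"
    unfolding openin_cantor_top_iff
  proof
    fix y assume "y \<in> UNIV - {p}"
    then obtain i where i: "y i \<noteq> p i" by auto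
    have "cyl (restr y (Suc i)) \<subseteq> UNIV - {p}"
      using i by (auto simp: mem_cyl_restr_iff)
    then show "\<exists>n. cyl (restr y n) \<subseteq> UNIV - {p}" by blast
  qed
  then show ?thesis by (simp add: closedin_def)
qed

lemma not_openin_cantor_singleton: "\<not> openin cantor_top {p}"
proof
  assume "openin cantor_top {p}"
  then obtain n where "cyl (restr p n) \<subseteq> {p}" unfolding openin_cantor_top_iff by blast
  then show False using cyl_restr_ex_neq[of p n] by blast
qed

lemma lebesgue_number_cyl:
  assumes K: "compactin cantor_top K" and U: "openin cantor_top U" and KU: "K \<subseteq> U"
  shows "\<exists>N. \<forall>y\<in>K. cyl (restr y N) \<subseteq> U"
proof -
  define C where "C = {(y, k). cyl (restr y k) \<subseteq> U}"
  define cyl' where "cyl' = (\<lambda>(y, k). cyl (restr y k))"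
  have cov: "K \<subseteq> \<Union> (cyl' ` C)"
  proof
    fix y assume "y \<in> K"
    then obtain k where "cyl (restr y k) \<subseteq> U" using KU U unfolding openin_cantor_top_iff by blast
    then have "(y, k) \<in> C" unfolding C_def by simp
    moreover have "y \<in> cyl' (y, k)" unfolding cyl'_def by simp
    ultimately show "y \<in> \<Union> (cyl' ` C)" by blast
  qed
  have op: "openin cantor_top V" if "V \<in> cyl' ` C" for V
    using that openin_cyl_restr unfolding cyl'_def by auto
  obtain \<F> where "finite \<F>" "\<F> \<subseteq> cyl' ` C" "K \<subseteq> \<Union>\<F>"
    using compactinD[OF K op cov] by blast
  then obtain C' where C': "finite C'" "C' \<subseteq> C" "K \<subseteq> \<Union> (cyl' ` C')"
    using finite_subset_image[of \<F> cyl' C] by blast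
  obtain N where N: "snd ` C' \<subseteq> {..<N}" using finite_nat_bounded[OF finite_imageI[OF C'(1)]] by blast
  have "cyl (restr y N) \<subseteq> U" if y: "y \<in> K" for y
  proof -
    obtain p where p: "p \<in> C'" "y \<in> cyl' p" using C'(3) y by blast
    obtain y' k where yk: "p = (y', k)" by (cases p)
    have "k < N" using N p(1) yk by (auto simp: image_subset_iff)
    then have "cyl (restr y N) \<subseteq> cyl (restr y k)" using cyl_restr_le by (meson less_imp_le subsetI)
    also have "\<dots> = cyl (restr y' k)" using p(2) yk unfolding cyl'_def by (simp add: cyl_restr_sym)
    also have "\<dots> \<subseteq> U" using p(1) yk C'(2) unfolding C_def by blast
    finally show ?thesis .
  qed
  then show ?thesis by blast
qed

abbreviation coin :: "nat \<Rightarrow> bool measure" where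
  "coin \<equiv> \<lambda>_. measure_pmf (bernoulli_pmf (1/2))"

lemma prob_space_cantor_M: "prob_space cantor_M"
  unfolding cantor_M_def by (intro prob_space_PiM) (simp add: prob_space_measure_pmf)

interpretation cantor: prob_space cantor_M by (rule prob_space_cantor_M)

lemma space_cantor_M[simp]: "space cantor_M = UNIV"
  unfolding cantor_M_def by (simp add: space_PiM)

lemma cyl_eq_prod_emb: "cyl s = prod_emb UNIV coin {..<length s} (PiE {..<length s} (\<lambda>i. {s!i}))"
proof (intro set_eqI)
  fix y
  show "y \<in> cyl s \<longleftrightarrow> y \<in> prod_emb UNIV coin {..<length s} (PiE {..<length s} (\<lambda>i. {s!i}))"
    unfolding prod_emb_def mem_cyl_iff by (simp add: PiE_iff Ball_def)
qed

lemma sets_cyl[measurable]: "cyl s \<in> sets cantor_M"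
  unfolding cyl_eq_prod_emb cantor_M_def
  by (intro measurable_prod_emb sets_PiM_I_finite) auto

lemma emeasure_cyl: "emeasure cantor_M (cyl s) = ennreal ((1/2) ^ length s)"
proof -
  have "emeasure cantor_M (cyl s) = (\<Prod>i\<in>{..<length s}. emeasure (coin i) {s!i})"
    unfolding cyl_eq_prod_emb cantor_M_def
    by (rule emeasure_PiM_emb) (auto simp: prob_space_measure_pmf)
  also have "\<dots> = (\<Prod>i\<in>{..<length s}. ennreal (1/2))"
    by (intro prod.cong refl) (simp add: emeasure_pmf_single split: bool.splits)
  finally show ?thesis by (simp only: prod_constant card_lessThan ennreal_power)
qed

lemma mu_cyl: "mu (cyl s) = (1/2) ^ length s"
  unfolding mu_def measure_def emeasure_cyl by simp

lemma mu_cyl_pos: "0 < mu (cyl s)"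
  by (simp add: mu_cyl)

lemma openin_cantor_top_sets:
  assumes "openin cantor_top U" shows "U \<in> sets cantor_M"
proof -
  have "U = \<Union> (cyl ` {s. cyl s \<subseteq> U})"
  proof
    show "U \<subseteq> \<Union> (cyl ` {s. cyl s \<subseteq> U})"
    proof
      fix y assume "y \<in> U"
      then obtain n where "cyl (restr y n) \<subseteq> U" using assms openin_cantor_top_iff by blast
      moreover have "y \<in> cyl (restr y n)" by (simp add: mem_cyl_restr_iff)
      ultimately show "y \<in> \<Union> (cyl ` {s. cyl s \<subseteq> U})" by blast
    qed
  qed auto
  also have "\<dots> \<in> sets cantor_M"
    by (intro sets.countable_UN') auto
  finally show ?thesis .
qed

lemma closedin_cantor_top_sets:
  assumes "closedin cantor_top U" shows "U \<in> sets cantor_M"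
proof -
  have "openin cantor_top (UNIV - U)" using assms by (simp add: closedin_def)
  then have "UNIV - U \<in> sets cantor_M" by (rule openin_cantor_top_sets)
  then have "space cantor_M - (UNIV - U) \<in> sets cantor_M" by blast
  moreover have "space cantor_M - (UNIV - U) = U" by auto
  ultimately show ?thesis by simp
qed

lemma sets_singleton: "{p} \<in> sets cantor_M"
  by (rule closedin_cantor_top_sets[OF closedin_cantor_singleton])

lemma mu_nonneg: "0 \<le> mu A"
  unfolding mu_def by simp

lemma mu_mono: "A \<subseteq> B \<Longrightarrow> B \<in> sets cantor_M \<Longrightarrow> mu A \<le> mu B"
  unfolding mu_def by (rule cantor.finite_measure_mono)

lemma mu_Un_le: "A \<in> sets cantor_M \<Longrightarrow> B \<in> sets cantor_M \<Longrightarrow> mu (A \<union> B) \<le> mu A + mu B"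
  unfolding mu_def by (rule measure_Un_le)

lemma mu_null: "A \<in> null_sets cantor_M \<Longrightarrow> mu A = 0"
  unfolding mu_def by (simp add: null_sets_def cantor.emeasure_eq_measure)

lemma mu_split: "A \<in> sets cantor_M \<Longrightarrow> B \<in> sets cantor_M \<Longrightarrow> mu B = mu (A \<inter> B) + mu (B - A)"
proof -
  assume a: "A \<in> sets cantor_M" "B \<in> sets cantor_M"
  have "measure cantor_M ((A \<inter> B) \<union> (B - A)) = measure cantor_M (A \<inter> B) + measure cantor_M (B - A)"
    using a by (intro cantor.finite_measure_Union) auto
  moreover have "(A \<inter> B) \<union> (B - A) = B" by blast
  ultimately show ?thesis unfolding mu_def by simp
qed

lemma mu_UNIV: "mu UNIV = 1"
  using cantor.prob_space by (simp add: mu_def)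

lemma singleton_null_sets: "{p} \<in> null_sets cantor_M"
proof -
  have s: "{p} \<in> sets cantor_M" by (rule sets_singleton)
  have le: "mu {p} \<le> (1/2) ^ n" for n
  proof -
    have "mu {p} \<le> mu (cyl (restr p n))" by (rule mu_mono) auto
    then show ?thesis by (simp add: mu_cyl)
  qed
  have "mu {p} \<le> 0"
  proof (rule ccontr)
    assume "\<not> mu {p} \<le> 0"
    then obtain n where "(1/2::real) ^ n < mu {p}" using real_arch_pow_inv[of "mu {p}" "1/2"] by auto
    then show False using le[of n] by simp
  qed
  then have "measure cantor_M {p} = 0" using mu_nonneg[of "{p}"] unfolding mu_def by simp
  then have "emeasure cantor_M {p} = 0" using s by (simp add: cantor.emeasure_eq_measure)
  then show ?thesis using s by (auto simp: null_sets_def)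
qed

lemma countable_null_sets: "countable S \<Longrightarrow> S \<in> null_sets cantor_M"
proof -
  assume "countable S"
  then have "(\<Union>x\<in>S. {x}) \<in> null_sets cantor_M" by (intro null_sets_UN' singleton_null_sets)
  then show ?thesis by simp
qed

lemma mu_singleton: "mu {p} = 0"
  by (rule mu_null[OF singleton_null_sets])

lemma mu_Compl_singleton: "mu (UNIV - {p}) = 1"
proof -
  have "mu (UNIV - {p}) = mu UNIV" unfolding mu_def
    by (rule measure_Diff_null_set) (auto simp: singleton_null_sets intro: sets.top[of cantor_M, simplified])
  then show ?thesis using mu_UNIV by simp
qed

lemma dens_ratio_eq_mu: "dens_ratio A z n = mu (A \<inter> cyl (restr z n)) / (1/2) ^ n"
  unfolding dens_ratio_def by (simp add: mu_cyl)

lemma dens_ratio_nonneg: "0 \<le> dens_ratio A z n"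
  unfolding dens_ratio_def using mu_nonneg mu_cyl_pos by simp

lemma dens_ratio_le_1: "dens_ratio A z n \<le> 1"
proof -
  have "mu (A \<inter> cyl (restr z n)) \<le> mu (cyl (restr z n))" by (intro mu_mono) auto
  then show ?thesis unfolding dens_ratio_def using mu_cyl_pos[of "restr z n"] by simp
qed

definition tri :: "nat \<Rightarrow> nat" where "tri k = k * (k + 1) div 2"

lemma tri_0[simp]: "tri 0 = 0" by (simp add: tri_def)

lemma tri_Suc: "tri (Suc k) = tri k + Suc k"
  unfolding tri_def by (induction k) auto

lemma strict_mono_tri: "strict_mono tri"
  by (rule strict_monoI_Suc) (simp add: tri_Suc)

lemma tri_less_iff: "tri j < tri k \<longleftrightarrow> j < k"
  by (rule strict_mono_less[OF strict_mono_tri])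

lemma tri_mono: "j \<le> k \<Longrightarrow> tri j \<le> tri k"
  by (simp add: strict_mono_less_eq[OF strict_mono_tri])

lemma le_tri: "k \<le> tri k"
  by (induction k) (auto simp: tri_Suc)

lemma block_of_tri_Suc: "block_of k = (LEAST j. k < tri (Suc j))"
proof -
  have "(j + 1) * (j + 2) div 2 = tri (Suc j)" for j
    unfolding tri_def by (simp add: algebra_simps)
  then show ?thesis unfolding block_of_def by simp
qed

lemma block_of_bounds: "tri (block_of k) \<le> k \<and> k < tri (Suc (block_of k))"
proof -
  have ex: "k < tri (Suc k)" using le_tri[of "Suc k"] by simp
  have 1: "k < tri (Suc (block_of k))"
    unfolding block_of_tri_Suc by (rule LeastI[of "\<lambda>j. k < tri (Suc j)"]) (rule ex)
  have 2: "tri (block_of k) \<le> k"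
  proof (cases "block_of k")
    case (Suc j)
    then have "\<not> k < tri (Suc j)"
      using not_less_Least[of j "\<lambda>j. k < tri (Suc j)"] unfolding block_of_tri_Suc by auto
    then show ?thesis using Suc by simp
  qed simp
  show ?thesis using 1 2 by simp
qed

lemma block_of_eq: "tri j \<le> k \<Longrightarrow> k < tri (Suc j) \<Longrightarrow> block_of k = j"
  using block_of_bounds[of k] tri_less_iff[of j "Suc (block_of k)"] tri_less_iff[of "block_of k" "Suc j"]
  by linarith

lemma block_of_tri: "block_of (tri i) = i"
  by (rule block_of_eq) (auto simp: tri_Suc)

lemma block_of_less_iff: "block_of k < m \<longleftrightarrow> k < tri m"
proof
  assume "block_of k < m"
  then show "k < tri m" using block_of_bounds[of k] tri_mono[of "Suc (block_of k)" m] by simp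
next
  assume "k < tri m"
  then show "block_of k < m" using block_of_bounds[of k] tri_less_iff[of "block_of k" m] by simp
qed

lemma stretch_list_snoc: "stretch_list (s @ [c]) = stretch_list s @ replicate (length s + 1) c"
proof -
  have e1: "map (\<lambda>j. replicate (j + 1) ((s @ [c]) ! j)) [0..<length s] = map (\<lambda>j. replicate (j + 1) (s ! j)) [0..<length s]"
  proof (rule map_cong[OF refl])
    fix j assume "j \<in> set [0..<length s]"
    then have "(s @ [c]) ! j = s ! j" by (simp add: nth_append)
    then show "replicate (j + 1) ((s @ [c]) ! j) = replicate (j + 1) (s ! j)" by (simp only:)
  qed
  have e2: "[0..<length (s @ [c])] = [0..<length s] @ [length s]" by simp
  show ?thesis unfolding stretch_list_def e2 map_append concat.simps concat_append e1 by simp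
qed

lemma stretch_list_Nil[simp]: "stretch_list [] = []"
  unfolding stretch_list_def by simp

lemma length_stretch_list[simp]: "length (stretch_list s) = tri (length s)"
  by (induction s rule: rev_induct) (simp_all add: stretch_list_snoc tri_Suc)

lemma stretch_list_nth: "k < tri (length s) \<Longrightarrow> stretch_list s ! k = s ! block_of k"
proof (induction s arbitrary: k rule: rev_induct)
  case Nil then show ?case by simp
next
  case (snoc c s)
  show ?case
  proof (cases "k < tri (length s)")
    case True
    then have "block_of k < length s" by (simp add: block_of_less_iff)
    then show ?thesis using True snoc.IH by (simp add: stretch_list_snoc nth_append)
  next
    case False
    then have "block_of k = length s" using snoc.prems
      by (intro block_of_eq) (auto simp: tri_Suc)
    then show ?thesis using False snoc.prems by (simp add: stretch_list_snoc nth_append tri_Suc del: replicate.simps)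
  qed
qed

lemma stretch_nth: "stretch x k = x (block_of k)"
  unfolding stretch_def by simp

lemma restr_stretch: "restr (stretch x) (tri m) = stretch_list (restr x m)"
proof (rule nth_equalityI)
  show "length (restr (stretch x) (tri m)) = length (stretch_list (restr x m))" by simp
  fix k assume "k < length (restr (stretch x) (tri m))"
  then have k: "k < tri m" by simp
  then have "block_of k < m" by (simp add: block_of_less_iff)
  then show "restr (stretch x) (tri m) ! k = stretch_list (restr x m) ! k"
    using k by (simp add: restr_nth stretch_list_nth stretch_nth)
qed

lemma stretch_list_take: "j \<le> length t \<Longrightarrow> stretch_list (take j t) = take (tri j) (stretch_list t)"
proof (rule nth_equalityI)
  assume j: "j \<le> length t"
  then have "tri j \<le> tri (length t)" by (rule tri_mono)
  then show "length (stretch_list (take j t)) = length (take (tri j) (stretch_list t))"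
    using j by (simp add: min_def)
  fix k assume "k < length (stretch_list (take j t))"
  have mj: "min (length t) j = j" using j by simp
  then have k: "k < tri j" using \<open>k < length (stretch_list (take j t))\<close> by simp
  then have "block_of k < j" by (simp add: block_of_less_iff)
  moreover have "k < tri (length t)" using k \<open>tri j \<le> tri (length t)\<close> by simp
  ultimately show "stretch_list (take j t) ! k = take (tri j) (stretch_list t) ! k"
    using k j mj by (simp add: stretch_list_nth)
qed

lemma stretch_list_inj: "stretch_list s = stretch_list t \<Longrightarrow> length s = length t \<Longrightarrow> s = t"
proof (rule nth_equalityI)
  assume e: "stretch_list s = stretch_list t" and l: "length s = length t"
  show "length s = length t" by fact
  fix i assume i: "i < length s"
  have "tri i < tri (length s)" using i by (simp add: tri_less_iff)
  then show "s ! i = t ! i"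
    using e l stretch_list_nth[of "tri i" s] stretch_list_nth[of "tri i" t] by (simp add: block_of_tri)
qed

lemma stretch_in_cyl_stretch_list: "stretch x \<in> cyl (stretch_list (restr x m))"
  unfolding mem_cyl_iff_restr by (simp add: restr_stretch)

lemma mem_cyl_stretch_restr_iff: "y \<in> cyl (stretch_list (restr x k)) \<longleftrightarrow> (\<forall>i<tri k. y i = stretch x i)"
  using mem_cyl_restr_iff[of y "stretch x" "tri k"] by (simp add: restr_stretch)

lemma stretch_list_prefix:
  assumes "y \<in> cyl (stretch_list t)" "y \<in> cyl (stretch_list t')" "length t \<le> length t'"
  shows "t = take (length t) t'"
proof -
  have "restr y (tri (length t)) = stretch_list t" using assms(1) unfolding mem_cyl_iff_restr by simp
  moreover have "restr y (tri (length t)) = take (tri (length t)) (stretch_list t')"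
    using assms(2,3) by (intro restr_eq_take_if_cyl) (simp_all add: tri_mono)
  moreover have "take (tri (length t)) (stretch_list t') = stretch_list (take (length t) t')"
    using assms(3) by (simp add: stretch_list_take)
  ultimately show ?thesis using assms(3) by (rule_tac stretch_list_inj) (simp_all add: min_def)
qed

lemma cyl_stretch_list_restr:
  assumes "y \<in> cyl (stretch_list s)" "y' \<in> cyl (stretch_list s)"
  shows "y \<in> cyl (restr y' (length s))"
proof -
  have "length s \<le> tri (length s)" by (rule le_tri)
  then have "\<forall>i<length s. y i = y' i" using assms unfolding mem_cyl_iff by auto
  then show ?thesis by (simp add: mem_cyl_restr_iff)
qed

lemma cyl_stretch_list_take:
  assumes "y \<in> cyl (stretch_list t)" "N \<le> length t"
  shows "y \<in> cyl (stretch_list (take N t))"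
proof -
  have "stretch_list (take N t) = take (tri N) (stretch_list t)" using assms(2) by (rule stretch_list_take)
  then show ?thesis using assms(1) unfolding mem_cyl_iff by auto
qed

lemma length_Fl: "a \<in> Fl n \<Longrightarrow> length a = Suc n"
  unfolding Fl_def by simp

lemma replicate_notin_Fl: "replicate (Suc n) c \<notin> Fl n"
  unfolding Fl_def by (cases c) simp_all

lemma FlI: "length a = Suc n \<Longrightarrow> (\<And>c. a \<noteq> replicate (Suc n) c) \<Longrightarrow> a \<in> Fl n"
  unfolding Fl_def by simp

lemma True_replicate_False_Fl: "1 \<le> n \<Longrightarrow> True # replicate n False \<in> Fl n"
proof (rule FlI)
  assume n: "1 \<le> n"
  show "length (True # replicate n False) = Suc n" by simp
  fix c show "True # replicate n False \<noteq> replicate (Suc n) c"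
  proof
    assume e: "True # replicate n False = replicate (Suc n) c"
    then have "c = True" by simp
    then have "replicate n False = replicate n True" using e by simp
    then show False using n by (cases n) auto
  qed
qed

definition block :: "(nat \<Rightarrow> bool) \<Rightarrow> nat \<Rightarrow> bool list" where
  "block y m = restr (seq_shift (tri m) y) (Suc m)"

lemma length_block[simp]: "length (block y m) = Suc m"
  unfolding block_def by simp

lemma in_cyl_append_block: "y \<in> cyl u \<Longrightarrow> length u = tri m \<Longrightarrow> y \<in> cyl (u @ block y m)"
  unfolding block_def by (simp add: mem_cyl_append_iff)

lemma block_Fl_or_constant: "block y m \<in> Fl m \<or> (\<exists>c. block y m = replicate (Suc m) c)"
  using FlI[of "block y m" m] by auto

lemma flag_before_longer_stretch:
  assumes y1: "y \<in> cyl (stretch_list t @ a)" and la: "length a = Suc (length t)"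
    and y2: "y \<in> cyl (stretch_list t')" and lt: "length t < length t'"
  shows "a = replicate (Suc (length t)) (t' ! length t)"
proof -
  let ?m = "length t"
  have A: "restr y (tri (Suc ?m)) = stretch_list t @ a"
    using y1 la unfolding mem_cyl_iff_restr by (simp add: tri_Suc)
  have le: "tri (Suc ?m) \<le> tri (length t')" using lt by (intro tri_mono) simp
  have "restr y (tri (Suc ?m)) = take (tri (Suc ?m)) (stretch_list t')"
    using y2 le by (intro restr_eq_take_if_cyl) simp_all
  also have "\<dots> = stretch_list (take (Suc ?m) t')"
    using lt by (simp add: stretch_list_take)
  also have "take (Suc ?m) t' = take ?m t' @ [t' ! ?m]"
    using lt by (simp add: take_Suc_conv_app_nth)
  finally have "stretch_list t @ a = stretch_list (take ?m t') @ replicate (?m + 1) (t' ! ?m)"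
    using A lt by (simp add: stretch_list_snoc min_def)
  moreover have "length (stretch_list t) = length (stretch_list (take ?m t'))"
    using lt by simp
  ultimately show ?thesis by simp
qed

lemma stretch_block_constant:
  assumes "stretch x \<in> cyl (stretch_list t @ a)" "length a = Suc (length t)"
  shows "a = replicate (Suc (length t)) (x (length t))"
proof -
  have "a = replicate (Suc (length t)) (restr x (Suc (length t)) ! length t)"
    using flag_before_longer_stretch[OF assms stretch_in_cyl_stretch_list[of x "Suc (length t)"]] by simp
  then show ?thesis by (simp add: restr_nth)
qed

lemma flag_cyl_unique:
  assumes y1: "y \<in> cyl (stretch_list t @ a)" and a: "a \<in> Fl (length t)"
    and y2: "y \<in> cyl (stretch_list t' @ a')" and a': "a' \<in> Fl (length t')"
  shows "t = t' \<and> a = a'"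
proof -
  have la: "length a = Suc (length t)" and la': "length a' = Suc (length t')"
    using a a' by (auto simp: length_Fl)
  have y1': "y \<in> cyl (stretch_list t)" and y2': "y \<in> cyl (stretch_list t')"
    using y1 y2 by (auto simp: mem_cyl_append_iff)
  have "\<not> length t < length t'"
  proof
    assume "length t < length t'"
    then have "a = replicate (Suc (length t)) (t' ! length t)" by (rule flag_before_longer_stretch[OF y1 la y2'])
    then show False using a replicate_notin_Fl by metis
  qed
  moreover have "\<not> length t' < length t"
  proof
    assume "length t' < length t"
    then have "a' = replicate (Suc (length t')) (t ! length t')" by (rule flag_before_longer_stretch[OF y2 la' y1'])
    then show False using a' replicate_notin_Fl by metis
  qed
  ultimately have l: "length t = length t'" by simp
  have "stretch_list t @ a = stretch_list t' @ a'"
    using y1 y2 la la' l unfolding mem_cyl_iff_restr by simp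
  then have "stretch_list t = stretch_list t' \<and> a = a'" using l by simp
  then show ?thesis using l stretch_list_inj by blast
qed

lemma pruned_tree_take: "pruned_tree T \<Longrightarrow> T s \<Longrightarrow> T (take n s)"
  unfolding pruned_tree_def by blast

lemma pruned_tree_Nil: "pruned_tree T \<Longrightarrow> T []"
  unfolding pruned_tree_def by (metis take_0)

lemma branches_restr: "x \<in> branches T \<Longrightarrow> T (restr x n)"
  unfolding branches_def by simp

lemma topspace_PrTr2: "topspace PrTr2 = {T. pruned_tree T}"
  unfolding PrTr2_def tree_space_top_def by simp

lemma openin_PrTr2_agree:
  assumes "finite F"
  shows "openin PrTr2 {T. pruned_tree T \<and> (\<forall>s\<in>F. T s = T0 s)}"
proof -
  define V where "V s = (if s \<in> F then {T0 s} else UNIV)" for s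
  have "{i. V i \<noteq> topspace (discrete_topology UNIV)} \<subseteq> F" by (auto simp: V_def)
  then have "openin tree_space_top (Pi\<^sub>E UNIV V)"
    unfolding tree_space_top_def using assms
    by (intro product_topology_basis) (auto intro: finite_subset)
  moreover have "Pi\<^sub>E UNIV V = {T. \<forall>s\<in>F. T s = T0 s}"
    by (auto simp: V_def PiE_iff) (metis singletonD)+
  ultimately show ?thesis unfolding PrTr2_def openin_subtopology by blast
qed

section \<open>The parity family\<close>

definition zeros :: "nat \<Rightarrow> bool" where "zeros = (\<lambda>_. False)"

definition odd_ones :: "bool list \<Rightarrow> bool" where "odd_ones t = odd (length (filter id t))"

lemma odd_ones_restr_Suc: "odd_ones (restr x (Suc k)) \<longleftrightarrow> (odd_ones (restr x k) \<noteq> x k)"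
  unfolding odd_ones_def restr_Suc by simp

definition parity_set :: "bool list \<Rightarrow> (nat \<Rightarrow> bool) set" where
  "parity_set t = (if odd_ones t then UNIV - {zeros} else {zeros})"

definition parity_closure :: "bool list \<Rightarrow> (nat \<Rightarrow> bool) set" where
  "parity_closure t = (if odd_ones t then UNIV else {zeros})"

lemma closure_of_parity_set: "cantor_top closure_of (parity_set t) = parity_closure t"
proof (cases "odd_ones t")
  case True
  have "cantor_top closure_of (UNIV - {zeros}) = UNIV"
  proof -
    have "zeros \<in> cantor_top closure_of (UNIV - {zeros})"
      unfolding in_closure_of
    proof (intro conjI allI impI)
      fix T assume T: "zeros \<in> T \<and> openin cantor_top T"
      then obtain n where "cyl (restr zeros n) \<subseteq> T" unfolding openin_cantor_top_iff by blast
      then show "\<exists>y. y \<in> UNIV - {zeros} \<and> y \<in> T"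
        using cyl_restr_ex_neq[of zeros n] by blast
    qed simp
    moreover have "UNIV - {zeros} \<subseteq> cantor_top closure_of (UNIV - {zeros})"
      by (rule closure_of_subset) simp
    ultimately show ?thesis by blast
  qed
  then show ?thesis using True unfolding parity_set_def parity_closure_def by simp
next
  case False
  then show ?thesis unfolding parity_set_def parity_closure_def by (simp add: closure_of_closedin closedin_cantor_singleton)
qed

lemma interior_of_parity_set: "cantor_top interior_of (parity_set t) = (if odd_ones t then UNIV - {zeros} else {})"
proof (cases "odd_ones t")
  case True
  have "openin cantor_top (UNIV - {zeros})" using closedin_cantor_singleton[of zeros] by (simp add: closedin_def)
  then show ?thesis using True unfolding parity_set_def by (simp add: interior_of_openin)
next
  case False
  have "cantor_top interior_of {zeros} = {}"
  proof (rule ccontr)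
    assume "cantor_top interior_of {zeros} \<noteq> {}"
    then have "cantor_top interior_of {zeros} = {zeros}" using interior_of_subset[of cantor_top "{zeros}"] by blast
    then show False using openin_interior_of[of cantor_top "{zeros}"] not_openin_cantor_singleton by simp
  qed
  then show ?thesis using False unfolding parity_set_def by simp
qed

lemma dualistic_parity_set: "dualistic (parity_set t)"
proof (cases "odd_ones t")
  case True
  have s: "UNIV - {zeros} \<in> sets cantor_M"
    using closedin_cantor_singleton[of zeros] by (intro openin_cantor_top_sets) (simp add: closedin_def)
  have "dens_ratio (UNIV - {zeros}) z n = 1" for z n
  proof -
    have "(UNIV - {zeros}) \<inter> cyl (restr z n) = cyl (restr z n) - {zeros}" by blast
    then have "mu ((UNIV - {zeros}) \<inter> cyl (restr z n)) = mu (cyl (restr z n))"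
      unfolding mu_def by (simp add: measure_Diff_null_set singleton_null_sets)
    then show ?thesis unfolding dens_ratio_def using mu_cyl_pos[of "restr z n"] by simp
  qed
  then have "dens_ratio (UNIV - {zeros}) z = (\<lambda>n. 1)" for z by (intro ext) simp
  then have "density_is (UNIV - {zeros}) z 1" for z unfolding density_is_def by simp
  then show ?thesis using True s unfolding dualistic_def parity_set_def by auto
next
  case False
  have s: "{zeros} \<in> sets cantor_M" by (rule closedin_cantor_top_sets[OF closedin_cantor_singleton])
  have "dens_ratio {zeros} z n = 0" for z n
  proof -
    have "mu ({zeros} \<inter> cyl (restr z n)) \<le> mu {zeros}" by (rule mu_mono) (auto simp: s)
    then have "mu ({zeros} \<inter> cyl (restr z n)) = 0" using mu_singleton mu_nonneg by (metis antisym)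
    then show ?thesis unfolding dens_ratio_def by simp
  qed
  then have "dens_ratio {zeros} z = (\<lambda>n. 0)" for z by (intro ext) simp
  then have "density_is {zeros} z 0" for z unfolding density_is_def by simp
  then show ?thesis using False s unfolding dualistic_def parity_set_def by auto
qed

lemma compliant_parity_set: "compliant T parity_set"
  unfolding compliant_def
proof (intro allI impI conjI)
  fix t
  show "dualistic (parity_set t)" by (rule dualistic_parity_set)
  show "parity_set t \<noteq> {}" unfolding parity_set_def using cyl_restr_ex_neq[of zeros 0] by auto
  show "parity_set t \<noteq> UNIV" unfolding parity_set_def using cyl_restr_ex_neq[of zeros 0] by auto
  show "mu (cantor_top interior_of parity_set t) = mu (cantor_top closure_of parity_set t)"
    unfolding interior_of_parity_set closure_of_parity_set parity_closure_def
    using mu_Compl_singleton[of zeros] mu_singleton[of zeros] mu_UNIV by (simp add: mu_def)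
qed

definition parity_offspring :: "(bool list \<Rightarrow> bool) \<Rightarrow> (nat \<Rightarrow> bool) set" where
  "parity_offspring T = stretch ` branches T \<union>
     (\<Union>{lconc (stretch_list t @ a) ` parity_closure t | t a. T t \<and> a \<in> Fl (length t)})"

lemma closed_offspring_parity_set: "closed_offspring T parity_set = parity_offspring T"
  unfolding closed_offspring_def parity_offspring_def closure_of_parity_set ..

lemma parity_offspring_cases:
  assumes "y \<in> parity_offspring T"
  obtains (branch) x where "x \<in> branches T" "y = stretch x"
    | (flag) t a z where "T t" "a \<in> Fl (length t)" "z \<in> parity_closure t" "y = lconc (stretch_list t @ a) z"
                       "y \<in> cyl (stretch_list t @ a)"
  using assms unfolding parity_offspring_def using lconc_in_cyl by blast

lemma parity_offspring_flag_cyl_iff: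
  assumes Tt: "T t" and a: "a \<in> Fl (length t)" and y: "y \<in> cyl (stretch_list t @ a)"
  shows "y \<in> parity_offspring T \<longleftrightarrow> seq_shift (length (stretch_list t @ a)) y \<in> parity_closure t"
proof
  assume "seq_shift (length (stretch_list t @ a)) y \<in> parity_closure t"
  then have "y \<in> lconc (stretch_list t @ a) ` parity_closure t"
    using lconc_seq_shift[OF y] by (metis image_eqI)
  then show "y \<in> parity_offspring T" unfolding parity_offspring_def using Tt a by blast
next
  assume "y \<in> parity_offspring T"
  then show "seq_shift (length (stretch_list t @ a)) y \<in> parity_closure t"
  proof (cases rule: parity_offspring_cases)
    case (branch x)
    have "length a = Suc (length t)" using a by (simp add: length_Fl)
    then have "a = replicate (Suc (length t)) (x (length t))" using stretch_block_constant y branch by blast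
    then show ?thesis using a replicate_notin_Fl by metis
  next
    case (flag t' a' z)
    then have "t = t' \<and> a = a'" using flag_cyl_unique[OF y a flag(5) flag(2)] by blast
    then show ?thesis using flag seq_shift_lconc[of "stretch_list t @ a" z] by simp
  qed
qed

lemma in_stretch_branches_if_all_levels:
  assumes H: "\<forall>k. \<exists>t. T t \<and> length t = k \<and> y \<in> cyl (stretch_list t)"
  shows "y \<in> stretch ` branches T"
proof -
  obtain tt where tt: "\<And>k. T (tt k) \<and> length (tt k) = k \<and> y \<in> cyl (stretch_list (tt k))"
    using H by metis
  define x where "x = (\<lambda>i. y (tri i))"
  have rx: "restr x k = tt k" for k
  proof (rule nth_equalityI)
    show "length (restr x k) = length (tt k)" using tt by simp
    fix i assume "i < length (restr x k)"
    then have i: "i < k" by simp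
    then have "tri i < tri k" by (simp add: tri_less_iff)
    then have "y (tri i) = stretch_list (tt k) ! tri i" using tt[of k] by (simp add: mem_cyl_iff)
    also have "\<dots> = tt k ! i" using \<open>tri i < tri k\<close> tt[of k] by (simp add: stretch_list_nth block_of_tri)
    finally show "restr x k ! i = tt k ! i" using i by (simp add: restr_nth x_def)
  qed
  have "x \<in> branches T" unfolding branches_def using rx tt by simp
  moreover have "y = stretch x"
  proof
    fix j
    have "j < tri (Suc j)" using le_tri[of "Suc j"] by simp
    then have "block_of j < Suc j" by (simp add: block_of_less_iff)
    have "y j = stretch_list (tt (Suc j)) ! j" using tt[of "Suc j"] \<open>j < tri (Suc j)\<close> by (simp add: mem_cyl_iff)
    also have "\<dots> = tt (Suc j) ! block_of j" using tt[of "Suc j"] \<open>j < tri (Suc j)\<close> by (simp add: stretch_list_nth)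
    also have "\<dots> = x (block_of j)" using rx[of "Suc j"] \<open>block_of j < Suc j\<close> by (metis restr_nth)
    finally show "y j = stretch x j" by (simp add: stretch_nth)
  qed
  ultimately show ?thesis by blast
qed

lemma cyl_stretch_list_disjoint_parity_offspring:
  assumes pr: "pruned_tree T" and s: "\<not> T s"
  shows "cyl (stretch_list s) \<inter> parity_offspring T = {}"
proof -
  have "y \<notin> parity_offspring T" if y: "y \<in> cyl (stretch_list s)" for y
  proof
    assume "y \<in> parity_offspring T"
    then show False
    proof (cases rule: parity_offspring_cases)
      case (branch x)
      have "y \<in> cyl (stretch_list (restr x (length s)))" using branch stretch_in_cyl_stretch_list by simp
      from stretch_list_prefix[OF y this] have "s = restr x (length s)" by simp
      then show False using s branches_restr[OF branch(1)] by metis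
    next
      case (flag t a z)
      show False
      proof (cases "length t < length s")
        case True
        have "length a = Suc (length t)" using flag(2) by (simp add: length_Fl)
        then have "a = replicate (Suc (length t)) (s ! length t)"
          using flag_before_longer_stretch[OF flag(5) _ y] True by simp
        then show False using flag(2) replicate_notin_Fl by metis
      next
        case False
        have "y \<in> cyl (stretch_list t)" using flag(5) by (simp add: mem_cyl_append_iff)
        from stretch_list_prefix[OF y this] have "s = take (length s) t" using False by simp
        then show False using s pruned_tree_take[OF pr flag(1)] by metis
      qed
    qed
  qed
  then show ?thesis by blast
qed

lemma flag_cyl_outside_parity_offspring:
  assumes t: "T t" and a: "a \<in> Fl (length t)" and y: "y \<in> cyl (stretch_list t @ a)"
    and ny: "y \<notin> parity_offspring T"
  shows "\<exists>n. cyl (restr y n) \<inter> parity_offspring T = {}"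
proof -
  let ?L = "length (stretch_list t @ a)"
  have "seq_shift ?L y \<notin> parity_closure t" using parity_offspring_flag_cyl_iff[of T, OF t a y] ny by simp
  then have C: "parity_closure t = {zeros}" "seq_shift ?L y \<noteq> zeros"
    unfolding parity_closure_def by (auto split: if_splits)
  then obtain i where i: "seq_shift ?L y i \<noteq> zeros i" by auto
  have "y' \<notin> parity_offspring T" if y': "y' \<in> cyl (restr y (?L + Suc i))" for y'
  proof -
    have "seq_shift ?L y' i = seq_shift ?L y i"
      using y' by (simp add: mem_cyl_restr_iff seq_shift_def)
    then have "seq_shift ?L y' \<notin> parity_closure t" using i C(1) by auto
    moreover have "y' \<in> cyl (stretch_list t @ a)" by (rule cyl_restr_mono[OF y y']) simp
    ultimately show ?thesis using parity_offspring_flag_cyl_iff[of T, OF t a] by blast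
  qed
  then show ?thesis by blast
qed

lemma ex_last_true_ge:
  assumes "\<forall>j\<le>m0. P j" and "\<not> P k"
  shows "\<exists>m\<ge>m0. P m \<and> \<not> P (Suc m)"
  using assms(2)
proof (induction k)
  case (Suc k)
  show ?case
  proof (cases "P k")
    case True
    have "m0 \<le> k" using Suc.prems assms(1) by (metis not_less_eq_eq)
    then show ?thesis using True Suc.prems by blast
  qed (rule Suc.IH)
qed (use assms(1) in auto)

lemma closedin_parity_offspring:
  assumes pr: "pruned_tree T"
  shows "closedin cantor_top (parity_offspring T)"
proof -
  have "\<exists>n. cyl (restr y n) \<inter> parity_offspring T = {}" if ny: "y \<notin> parity_offspring T" for y
  proof -
    define P where "P k \<longleftrightarrow> (\<exists>t. T t \<and> length t = k \<and> y \<in> cyl (stretch_list t))" for k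
    have "\<not> (\<forall>k. P k)"
      using in_stretch_branches_if_all_levels[of T y] ny unfolding P_def parity_offspring_def by blast
    moreover have "P 0" unfolding P_def using pruned_tree_Nil[OF pr] by (auto simp: mem_cyl_iff)
    ultimately obtain m where "P m" and nP: "\<not> P (Suc m)" using ex_last_true_ge[of 0 P] by auto
    then obtain t where t: "T t" "length t = m" "y \<in> cyl (stretch_list t)" unfolding P_def by blast
    have ya: "y \<in> cyl (stretch_list t @ block y m)" using t by (intro in_cyl_append_block) simp_all
    consider "block y m \<in> Fl m" | c where "block y m = replicate (Suc m) c"
      using block_Fl_or_constant by blast
    then show ?thesis
    proof cases
      case 1
      then show ?thesis using flag_cyl_outside_parity_offspring[OF t(1) _ ya ny] t(2) by simp
    next
      case (2 c)
      then have sl: "stretch_list (t @ [c]) = stretch_list t @ block y m"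
        using t(2) by (simp add: stretch_list_snoc)
      then have "\<not> T (t @ [c])" using nP ya t(2) unfolding P_def by fastforce
      then have "cyl (stretch_list (t @ [c])) \<inter> parity_offspring T = {}"
        by (rule cyl_stretch_list_disjoint_parity_offspring[OF pr])
      moreover have "cyl (restr y (tri (Suc m))) = cyl (stretch_list (t @ [c]))"
        using ya sl t(2) by (simp add: mem_cyl_iff_restr cyl_def tri_Suc)
      ultimately show ?thesis by metis
    qed
  qed
  then have "openin cantor_top (UNIV - parity_offspring T)"
    unfolding openin_cantor_top_iff by blast
  then show ?thesis by (simp add: closedin_def)
qed

lemma compactin_parity_offspring: "pruned_tree T \<Longrightarrow> compactin cantor_top (parity_offspring T)"
  by (rule closedin_compact_space[OF compact_space_cantor_top closedin_parity_offspring])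

lemma sets_parity_offspring: "pruned_tree T \<Longrightarrow> parity_offspring T \<in> sets cantor_M"
  by (rule closedin_cantor_top_sets[OF closedin_parity_offspring])

section \<open>Oscillation along branches with infinitely many ones\<close>

definition flagged_zeros :: "(nat \<Rightarrow> bool) set" where
  "flagged_zeros = (\<lambda>(t, a). lconc (stretch_list t @ a) zeros) ` UNIV"

lemma flagged_zeros_null: "flagged_zeros \<in> null_sets cantor_M"
  unfolding flagged_zeros_def by (intro countable_null_sets countable_image) simp

definition constant_blocks :: "bool list \<Rightarrow> (nat \<Rightarrow> bool) set" where
  "constant_blocks t = (\<Union>c. cyl (stretch_list t @ replicate (Suc (length t)) c))"

lemma sets_constant_blocks: "constant_blocks t \<in> sets cantor_M"
  unfolding constant_blocks_def by (intro sets.countable_UN) auto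

lemma mu_constant_blocks_le: "mu (constant_blocks t) \<le> (1/2) ^ tri (length t) * (1/2) ^ length t"
proof -
  let ?C = "\<lambda>c. cyl (stretch_list t @ replicate (Suc (length t)) c)"
  have "constant_blocks t = ?C False \<union> ?C True"
    unfolding constant_blocks_def by (auto simp: UNIV_bool)
  then have "mu (constant_blocks t) \<le> mu (?C False) + mu (?C True)"
    by (simp add: mu_Un_le)
  also have "\<dots> = (1/2) ^ tri (length t) * (1/2) ^ length t"
    by (simp add: mu_cyl power_add)
  finally show ?thesis .
qed

lemma cyl_block_cases:
  assumes "y \<in> cyl (stretch_list t)"
  shows "y \<in> constant_blocks t \<or> block y (length t) \<in> Fl (length t)"
  using block_Fl_or_constant[of y "length t"] in_cyl_append_block[OF assms]
  unfolding constant_blocks_def by fastforce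

lemma cyl_diff_parity_offspring_odd:
  assumes Tt: "T t" and od: "odd_ones t"
  shows "cyl (stretch_list t) - parity_offspring T \<subseteq> constant_blocks t"
proof
  fix y assume y: "y \<in> cyl (stretch_list t) - parity_offspring T"
  have "y \<in> parity_offspring T" if "block y (length t) \<in> Fl (length t)"
    using parity_offspring_flag_cyl_iff[of T, OF Tt that] in_cyl_append_block[of y "stretch_list t"] y od
    by (simp add: parity_closure_def)
  then show "y \<in> constant_blocks t" using cyl_block_cases y by blast
qed

lemma parity_offspring_cyl_even:
  assumes Tt: "T t" and ev: "\<not> odd_ones t"
  shows "parity_offspring T \<inter> cyl (stretch_list t) \<subseteq> constant_blocks t \<union> flagged_zeros"
proof
  fix y assume y: "y \<in> parity_offspring T \<inter> cyl (stretch_list t)"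
  let ?a = "block y (length t)"
  have "y \<in> flagged_zeros" if a: "?a \<in> Fl (length t)"
  proof -
    have ya: "y \<in> cyl (stretch_list t @ ?a)" using y by (intro in_cyl_append_block) simp_all
    then have "seq_shift (length (stretch_list t @ ?a)) y = zeros"
      using parity_offspring_flag_cyl_iff[of T, OF Tt a ya] ev y by (simp add: parity_closure_def)
    then have "y = lconc (stretch_list t @ ?a) zeros" using lconc_seq_shift[OF ya] by simp
    then show ?thesis unfolding flagged_zeros_def by (auto intro!: image_eqI[of _ _ "(t, ?a)"])
  qed
  then show "y \<in> constant_blocks t \<union> flagged_zeros" using cyl_block_cases y by blast
qed

lemma mu_parity_offspring_odd_level:
  assumes pr: "pruned_tree T" and Tt: "T t" and od: "odd_ones t"
  shows "(1/2) ^ tri (length t) * (1 - (1/2) ^ length t) \<le> mu (parity_offspring T \<inter> cyl (stretch_list t))"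
proof -
  let ?s = "cyl (stretch_list t)"
  have "mu ?s = mu (parity_offspring T \<inter> ?s) + mu (?s - parity_offspring T)"
    using sets_parity_offspring[OF pr] by (intro mu_split) simp_all
  moreover have "mu (?s - parity_offspring T) \<le> mu (constant_blocks t)"
    by (rule mu_mono[OF cyl_diff_parity_offspring_odd[of T, OF Tt od] sets_constant_blocks])
  ultimately show ?thesis using mu_constant_blocks_le[of t] by (simp add: mu_cyl algebra_simps)
qed

lemma mu_parity_offspring_even_level:
  assumes Tt: "T t" and ev: "\<not> odd_ones t"
  shows "mu (parity_offspring T \<inter> cyl (stretch_list t)) \<le> (1/2) ^ tri (length t) * (1/2) ^ length t"
proof -
  have Z: "flagged_zeros \<in> sets cantor_M" using flagged_zeros_null by auto
  have "mu (parity_offspring T \<inter> cyl (stretch_list t)) \<le> mu (constant_blocks t \<union> flagged_zeros)"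
    by (rule mu_mono[OF parity_offspring_cyl_even[of T, OF Tt ev] sets.Un[OF sets_constant_blocks Z]])
  also have "\<dots> \<le> mu (constant_blocks t) + mu flagged_zeros"
    by (rule mu_Un_le[OF sets_constant_blocks Z])
  finally show ?thesis using mu_constant_blocks_le[of t] by (simp add: mu_null[OF flagged_zeros_null])
qed

lemma limsup_ereal_eq_1:
  fixes X :: "nat \<Rightarrow> real"
  assumes le: "\<And>n. X n \<le> 1" and fr: "\<And>e N. 0 < e \<Longrightarrow> \<exists>n\<ge>N. 1 - e < X n"
  shows "limsup (\<lambda>n. ereal (X n)) = 1"
proof (rule antisym)
  show "limsup (\<lambda>n. ereal (X n)) \<le> 1"
    by (rule Limsup_bounded) (simp add: le)
  show "1 \<le> limsup (\<lambda>n. ereal (X n))"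
    unfolding limsup_INF_SUP
  proof (rule INF_greatest)
    fix N :: nat
    show "1 \<le> (SUP n\<in>{N..}. ereal (X n))"
    proof (rule ereal_le_epsilon2)
      fix e :: real assume e: "0 < e"
      obtain n where n: "n \<ge> N" "1 - e < X n" using fr[OF e] by blast
      have "ereal (X n) \<le> (SUP n\<in>{N..}. ereal (X n))" by (rule SUP_upper) (simp add: n)
      then have "ereal (X n) + ereal e \<le> (SUP n\<in>{N..}. ereal (X n)) + ereal e" by (rule add_right_mono)
      moreover have "1 \<le> ereal (X n) + ereal e" using n by simp
      ultimately show "1 \<le> (SUP n\<in>{N..}. ereal (X n)) + ereal e" by (rule order_trans[rotated])
    qed
  qed
qed

lemma liminf_ereal_eq_0:
  fixes X :: "nat \<Rightarrow> real"
  assumes ge: "\<And>n. 0 \<le> X n" and fr: "\<And>e N. 0 < e \<Longrightarrow> \<exists>n\<ge>N. X n < e"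
  shows "liminf (\<lambda>n. ereal (X n)) = 0"
proof (rule antisym)
  show "0 \<le> liminf (\<lambda>n. ereal (X n))"
    by (rule Liminf_bounded) (simp add: ge)
  show "liminf (\<lambda>n. ereal (X n)) \<le> 0"
    unfolding liminf_SUP_INF
  proof (rule SUP_least)
    fix N :: nat
    show "(INF n\<in>{N..}. ereal (X n)) \<le> 0"
    proof (rule ereal_le_epsilon2)
      fix e :: real assume e: "0 < e"
      obtain n where n: "n \<ge> N" "X n < e" using fr[OF e] by blast
      have "(INF n\<in>{N..}. ereal (X n)) \<le> ereal (X n)" by (rule INF_lower) (simp add: n)
      moreover have "ereal (X n) \<le> 0 + ereal e" using n by simp
      ultimately show "(INF n\<in>{N..}. ereal (X n)) \<le> 0 + ereal e" by (rule order_trans)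
    qed
  qed
qed

lemma dens_ratio_stretch_tri:
  "dens_ratio A (stretch x) (tri m) = mu (A \<inter> cyl (stretch_list (restr x m))) / (1/2) ^ tri m"
  unfolding dens_ratio_eq_mu by (simp add: restr_stretch)

lemma dens_ratio_parity_offspring_odd_level:
  assumes "pruned_tree T" "x \<in> branches T" "odd_ones (restr x m)"
  shows "1 - (1/2) ^ m \<le> dens_ratio (parity_offspring T) (stretch x) (tri m)"
  using mu_parity_offspring_odd_level[OF assms(1) branches_restr[OF assms(2)] assms(3)]
  by (simp add: dens_ratio_stretch_tri field_simps)

lemma dens_ratio_parity_offspring_even_level:
  assumes "x \<in> branches T" "\<not> odd_ones (restr x m)"
  shows "dens_ratio (parity_offspring T) (stretch x) (tri m) \<le> (1/2) ^ m"
  using mu_parity_offspring_even_level[of T, OF branches_restr[OF assms(1)] assms(2)]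
  by (simp add: dens_ratio_stretch_tri field_simps)

lemma odd_ones_restr_frequently:
  assumes "x \<in> NN"
  shows "\<exists>m\<ge>N. odd_ones (restr x m) = b"
proof -
  obtain k where k: "N \<le> k" "x k"
    using assms unfolding NN_def infinite_nat_iff_unbounded_le by auto
  then have "odd_ones (restr x (Suc k)) \<longleftrightarrow> \<not> odd_ones (restr x k)" by (simp add: odd_ones_restr_Suc)
  then show ?thesis using k(1) by (metis le_SucI)
qed

lemma osc_parity_offspring_infinite_ones:
  assumes pr: "pruned_tree T" and xb: "x \<in> branches T" and nn: "x \<in> NN"
  shows "osc (parity_offspring T) (stretch x) = 1"
proof -
  let ?X = "dens_ratio (parity_offspring T) (stretch x)"
  have level: "\<exists>m\<ge>N. (1/2) ^ m < e \<and> odd_ones (restr x m) = b" if e: "0 < e" for e :: real and N b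
  proof -
    obtain m0 where m0: "(1/2::real) ^ m0 < e" using real_arch_pow_inv[OF e, of "1/2"] by auto
    obtain m where m: "max N m0 \<le> m" "odd_ones (restr x m) = b"
      using odd_ones_restr_frequently[OF nn] by blast
    have "(1/2::real) ^ m \<le> (1/2) ^ m0" using m(1) by (intro power_decreasing) simp_all
    then have "(1/2::real) ^ m < e" using m0 by linarith
    then show ?thesis using m by (intro exI[of _ m]) auto
  qed
  have hi: "\<exists>n\<ge>N. 1 - e < ?X n" if e: "0 < e" for e N
  proof -
    obtain m where "N \<le> m" "(1/2) ^ m < e" "odd_ones (restr x m)" using level[OF e] by blast
    then show ?thesis using dens_ratio_parity_offspring_odd_level[OF pr xb] le_tri[of m]
      by (intro exI[of _ "tri m"]) force
  qed
  have lo: "\<exists>n\<ge>N. ?X n < e" if e: "0 < e" for e N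
  proof -
    obtain m where "N \<le> m" "(1/2) ^ m < e" "\<not> odd_ones (restr x m)" using level[OF e] by blast
    then show ?thesis using dens_ratio_parity_offspring_even_level[OF xb] le_tri[of m]
      by (intro exI[of _ "tri m"]) force
  qed
  have "limsup (\<lambda>n. ereal (?X n)) = 1" by (rule limsup_ereal_eq_1[OF dens_ratio_le_1 hi])
  moreover have "liminf (\<lambda>n. ereal (?X n)) = 0" by (rule liminf_ereal_eq_0[OF dens_ratio_nonneg lo])
  ultimately show ?thesis unfolding osc_def by simp
qed

section \<open>Density along branches with finitely many ones\<close>

definition ones_block_cyl :: "(nat \<Rightarrow> bool) \<Rightarrow> nat \<Rightarrow> (nat \<Rightarrow> bool) set" where
  "ones_block_cyl x k = cyl (stretch_list (restr x k) @ replicate (Suc k) True)"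

(* Beyond level m the branch x is constantly False, so a point leaving the stretch of x
   through a constant block must do so through a block of ones. *)
lemma deviation_from_stretch:
  assumes xF: "\<forall>k\<ge>m. \<not> x k" and n: "tri m \<le> n" and y: "y \<in> cyl (restr (stretch x) n)"
    and ne: "y \<noteq> stretch x"
  shows "\<exists>k\<ge>m. y \<in> ones_block_cyl x k \<or> (block y k \<in> Fl k \<and> y \<in> cyl (stretch_list (restr x k) @ block y k))"
proof -
  define P where "P k \<longleftrightarrow> y \<in> cyl (stretch_list (restr x k))" for k
  have "P j" if "j \<le> m" for j
    using y n tri_mono[OF that] unfolding P_def mem_cyl_stretch_restr_iff mem_cyl_restr_iff by simp
  moreover have "\<not> (\<forall>k. P k)"
  proof
    assume H: "\<forall>k. P k"
    have "y i = stretch x i" for i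
      using H[rule_format, of "Suc i"] le_tri[of "Suc i"] unfolding P_def mem_cyl_stretch_restr_iff by simp
    then show False using ne by auto
  qed
  ultimately obtain k where km: "m \<le> k" and "P k" and nP: "\<not> P (Suc k)"
    using ex_last_true_ge[of m P] by auto
  then have ya: "y \<in> cyl (stretch_list (restr x k) @ block y k)"
    unfolding P_def by (intro in_cyl_append_block) simp_all
  consider "block y k \<in> Fl k" | c where "block y k = replicate (Suc k) c"
    using block_Fl_or_constant by blast
  then show ?thesis
  proof cases
    case (2 c)
    have "c = True"
    proof (rule ccontr)
      assume "c \<noteq> True"
      then have "stretch_list (restr x (Suc k)) = stretch_list (restr x k) @ block y k"
        using 2 xF km by (simp add: restr_Suc stretch_list_snoc)
      then show False using nP ya unfolding P_def by simp
    qed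
    then show ?thesis using ya 2 km unfolding ones_block_cyl_def by auto
  qed (use ya km in blast)
qed

lemma mu_ones_block_cyl_le:
  assumes xF: "\<forall>k\<ge>m. \<not> x k" and km: "m \<le> k"
  shows "mu (cyl (restr (stretch x) n) \<inter> ones_block_cyl x k) \<le> (1/2) ^ n * (1/2) ^ Suc k"
proof (cases "n \<le> tri k")
  case True
  have "ones_block_cyl x k \<subseteq> cyl (restr (stretch x) n)"
  proof
    fix z assume "z \<in> ones_block_cyl x k"
    then have "z \<in> cyl (stretch_list (restr x k))" unfolding ones_block_cyl_def by (simp add: mem_cyl_append_iff)
    then show "z \<in> cyl (restr (stretch x) n)" using True unfolding mem_cyl_stretch_restr_iff mem_cyl_restr_iff by simp
  qed
  then have "mu (cyl (restr (stretch x) n) \<inter> ones_block_cyl x k) = (1/2) ^ (tri k + Suc k)"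
    unfolding ones_block_cyl_def by (simp add: Int_absorb1 mu_cyl)
  also have "\<dots> \<le> (1/2) ^ (n + Suc k)" using True by (intro power_decreasing) simp_all
  finally show ?thesis by (simp add: power_add)
next
  case False
  have "cyl (restr (stretch x) n) \<inter> ones_block_cyl x k = {}"
  proof (rule ccontr)
    assume "cyl (restr (stretch x) n) \<inter> ones_block_cyl x k \<noteq> {}"
    then obtain z where z1: "z \<in> cyl (restr (stretch x) n)" and z2: "z \<in> ones_block_cyl x k" by blast
    have "z (tri k) = stretch x (tri k)" using z1 False by (simp add: mem_cyl_restr_iff)
    also have "\<dots> = False" using xF km by (simp add: stretch_nth block_of_tri)
    finally have a: "\<not> z (tri k)" by simp
    have "seq_shift (tri k) z \<in> cyl (replicate (Suc k) True)" using z2 unfolding ones_block_cyl_def by (simp add: mem_cyl_append_iff)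
    then have "seq_shift (tri k) z 0 = True" by (simp add: mem_cyl_iff)
    then show False using a by (simp add: seq_shift_def)
  qed
  then show ?thesis by (simp add: mu_def)
qed

lemma sets_UN_ones_block_cyl: "(\<Union>i. cyl (restr (stretch x) n) \<inter> ones_block_cyl x (m + i)) \<in> sets cantor_M"
  unfolding ones_block_cyl_def by (intro sets.countable_UN) auto

lemma mu_UN_ones_block_cyl_le:
  assumes xF: "\<forall>k\<ge>m. \<not> x k"
  shows "mu (\<Union>i. cyl (restr (stretch x) n) \<inter> ones_block_cyl x (m + i)) \<le> (1/2) ^ n * (1/2) ^ m"
proof -
  let ?A = "\<lambda>i. cyl (restr (stretch x) n) \<inter> ones_block_cyl x (m + i)"
  let ?b = "\<lambda>i. ((1/2::real) ^ n * (1/2) ^ Suc m) * (1/2) ^ i"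
  have bA: "mu (?A i) \<le> ?b i" for i
    using mu_ones_block_cyl_le[OF xF, of "m + i" n] by (simp add: power_add mult.assoc)
  have sb: "?b sums (((1/2) ^ n * (1/2) ^ Suc m) * (1 / (1 - 1/2)))"
    by (intro sums_mult geometric_sums) simp
  have sA: "summable (\<lambda>i. mu (?A i))"
    by (rule summable_comparison_test[OF _ sums_summable[OF sb]]) (use bA mu_nonneg in auto)
  have "mu (\<Union>i. ?A i) \<le> (\<Sum>i. mu (?A i))"
    unfolding mu_def using sA[unfolded mu_def] unfolding ones_block_cyl_def
    by (intro cantor.finite_measure_subadditive_countably) auto
  also have "\<dots> \<le> (\<Sum>i. ?b i)" by (intro suminf_le bA sA sums_summable[OF sb])
  also have "\<dots> = (1/2) ^ n * (1/2) ^ m" using sums_unique[OF sb] by simp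
  finally show ?thesis .
qed

lemma cyl_stretch_diff_parity_offspring_odd_tail:
  assumes xb: "x \<in> branches T" and xF: "\<forall>k\<ge>m. \<not> x k"
    and od: "\<forall>k\<ge>m. odd_ones (restr x k)" and n: "tri m \<le> n"
  shows "cyl (restr (stretch x) n) - parity_offspring T
    \<subseteq> {stretch x} \<union> (\<Union>i. cyl (restr (stretch x) n) \<inter> ones_block_cyl x (m + i))"
proof
  fix y assume y: "y \<in> cyl (restr (stretch x) n) - parity_offspring T"
  show "y \<in> {stretch x} \<union> (\<Union>i. cyl (restr (stretch x) n) \<inter> ones_block_cyl x (m + i))"
  proof (cases "y = stretch x")
    case False
    then obtain k where k: "k \<ge> m" and
      d: "y \<in> ones_block_cyl x k \<or> (block y k \<in> Fl k \<and> y \<in> cyl (stretch_list (restr x k) @ block y k))"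
      using deviation_from_stretch[OF xF n] y by blast
    have "y \<notin> cyl (stretch_list (restr x k) @ block y k)" if "block y k \<in> Fl k"
      using parity_offspring_flag_cyl_iff[of T "restr x k" "block y k" y] branches_restr[OF xb] that od k y
      by (auto simp: parity_closure_def)
    then have "y \<in> cyl (restr (stretch x) n) \<inter> ones_block_cyl x (m + (k - m))" using d y k by auto
    then show ?thesis by blast
  qed simp
qed

lemma parity_offspring_cyl_stretch_even_tail:
  assumes xb: "x \<in> branches T" and xF: "\<forall>k\<ge>m. \<not> x k"
    and ev: "\<forall>k\<ge>m. \<not> odd_ones (restr x k)" and n: "tri m \<le> n"
  shows "parity_offspring T \<inter> cyl (restr (stretch x) n)
    \<subseteq> {stretch x} \<union> flagged_zeros \<union> (\<Union>i. cyl (restr (stretch x) n) \<inter> ones_block_cyl x (m + i))"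
proof
  fix y assume y: "y \<in> parity_offspring T \<inter> cyl (restr (stretch x) n)"
  show "y \<in> {stretch x} \<union> flagged_zeros \<union> (\<Union>i. cyl (restr (stretch x) n) \<inter> ones_block_cyl x (m + i))"
  proof (cases "y = stretch x")
    case False
    then obtain k where k: "k \<ge> m" and
      d: "y \<in> ones_block_cyl x k \<or> (block y k \<in> Fl k \<and> y \<in> cyl (stretch_list (restr x k) @ block y k))"
      using deviation_from_stretch[OF xF n] y by blast
    show ?thesis
    proof (cases "y \<in> ones_block_cyl x k")
      case True
      then have "y \<in> cyl (restr (stretch x) n) \<inter> ones_block_cyl x (m + (k - m))" using y k by simp
      then show ?thesis by blast
    next
      case False
      let ?u = "stretch_list (restr x k) @ block y k"
      have f: "block y k \<in> Fl (length (restr x k))" and yc: "y \<in> cyl ?u" using d False by auto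
      have "seq_shift (length ?u) y = zeros"
        using parity_offspring_flag_cyl_iff[of T, OF branches_restr[OF xb] f yc] ev k y
        by (simp add: parity_closure_def)
      then have "y = lconc ?u zeros" using lconc_seq_shift[OF yc] by simp
      then have "y \<in> flagged_zeros"
        unfolding flagged_zeros_def by (auto intro!: image_eqI[of _ _ "(restr x k, block y k)"])
      then show ?thesis by simp
    qed
  qed simp
qed

lemma dens_ratio_parity_offspring_odd_tail:
  assumes pr: "pruned_tree T" and xb: "x \<in> branches T" and xF: "\<forall>k\<ge>m. \<not> x k"
    and od: "\<forall>k\<ge>m. odd_ones (restr x k)" and n: "tri m \<le> n"
  shows "1 - (1/2) ^ m \<le> dens_ratio (parity_offspring T) (stretch x) n"
proof -
  let ?s = "cyl (restr (stretch x) n)"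
  let ?U = "\<Union>i. ?s \<inter> ones_block_cyl x (m + i)"
  have U: "?U \<in> sets cantor_M" by (rule sets_UN_ones_block_cyl)
  have "mu ?s = mu (parity_offspring T \<inter> ?s) + mu (?s - parity_offspring T)"
    using sets_parity_offspring[OF pr] by (intro mu_split) simp_all
  moreover have "mu (?s - parity_offspring T) \<le> mu ({stretch x} \<union> ?U)"
    by (rule mu_mono[OF cyl_stretch_diff_parity_offspring_odd_tail[OF xb xF od n] sets.Un[OF sets_singleton U]])
  moreover have "mu ({stretch x} \<union> ?U) \<le> mu {stretch x} + mu ?U"
    by (rule mu_Un_le[OF sets_singleton U])
  moreover have "mu ?U \<le> (1/2) ^ n * (1/2) ^ m" by (rule mu_UN_ones_block_cyl_le[OF xF])
  ultimately have "(1/2) ^ n - (1/2) ^ n * (1/2) ^ m \<le> mu (parity_offspring T \<inter> ?s)"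
    by (simp add: mu_singleton mu_cyl)
  then show ?thesis unfolding dens_ratio_eq_mu by (simp add: field_simps)
qed

lemma dens_ratio_parity_offspring_even_tail:
  assumes xb: "x \<in> branches T" and xF: "\<forall>k\<ge>m. \<not> x k"
    and ev: "\<forall>k\<ge>m. \<not> odd_ones (restr x k)" and n: "tri m \<le> n"
  shows "dens_ratio (parity_offspring T) (stretch x) n \<le> (1/2) ^ m"
proof -
  let ?s = "cyl (restr (stretch x) n)"
  let ?U = "\<Union>i. ?s \<inter> ones_block_cyl x (m + i)"
  have U: "?U \<in> sets cantor_M" by (rule sets_UN_ones_block_cyl)
  have P: "flagged_zeros \<in> sets cantor_M" using flagged_zeros_null by auto
  have "mu (parity_offspring T \<inter> ?s) \<le> mu ({stretch x} \<union> flagged_zeros \<union> ?U)"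
    by (rule mu_mono[OF parity_offspring_cyl_stretch_even_tail[OF xb xF ev n]
          sets.Un[OF sets.Un[OF sets_singleton P] U]])
  also have "\<dots> \<le> mu ({stretch x} \<union> flagged_zeros) + mu ?U"
    by (rule mu_Un_le[OF sets.Un[OF sets_singleton P] U])
  also have "\<dots> \<le> mu {stretch x} + mu flagged_zeros + mu ?U"
    using mu_Un_le[OF sets_singleton P, of "stretch x"] by simp
  also have "\<dots> \<le> (1/2) ^ n * (1/2) ^ m"
    using mu_UN_ones_block_cyl_le[OF xF, of n] by (simp add: mu_singleton mu_null[OF flagged_zeros_null])
  finally show ?thesis unfolding dens_ratio_eq_mu by (simp add: field_simps)
qed

lemma LIMSEQ_geometric_tail_bound:
  fixes X :: "nat \<Rightarrow> real"
  assumes "\<And>m. M \<le> m \<Longrightarrow> \<exists>N. \<forall>n\<ge>N. \<bar>X n - d\<bar> \<le> (1/2) ^ m"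
  shows "X \<longlonglongrightarrow> d"
proof (rule LIMSEQ_I)
  fix r :: real assume r: "0 < r"
  obtain m0 where m0: "(1/2::real) ^ m0 < r" using real_arch_pow_inv[OF r, of "1/2"] by auto
  obtain N where N: "\<forall>n\<ge>N. \<bar>X n - d\<bar> \<le> (1/2) ^ max m0 M" using assms[of "max m0 M"] by auto
  have pm: "(1/2::real) ^ max m0 M \<le> (1/2) ^ m0" by (intro power_decreasing) simp_all
  have "\<bar>X n - d\<bar> < r" if "N \<le> n" for n using N[rule_format, OF that] pm m0 by linarith
  then have "norm (X n - d) < r" if "N \<le> n" for n using that by simp
  then show "\<exists>no. \<forall>n\<ge>no. norm (X n - d) < r" by blast
qed

lemma density_parity_offspring_finite_ones:
  assumes pr: "pruned_tree T" and xb: "x \<in> branches T" and nn: "x \<notin> NN"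
  shows "\<exists>d\<in>{0,1}. density_is (parity_offspring T) (stretch x) d"
proof -
  let ?X = "dens_ratio (parity_offspring T) (stretch x)"
  have "finite {n. x n}" using nn unfolding NN_def by simp
  then obtain M where "{n. x n} \<subseteq> {..<M}" using finite_nat_bounded by blast
  then have xF: "\<forall>k\<ge>M. \<not> x k" by auto
  have par: "odd_ones (restr x k) = odd_ones (restr x M)" if "M \<le> k" for k
    using that
  proof (induction k rule: dec_induct)
    case (step k) then show ?case using xF by (simp add: odd_ones_restr_Suc)
  qed simp
  show ?thesis
  proof (cases "odd_ones (restr x M)")
    case True
    have "\<bar>?X n - 1\<bar> \<le> (1/2) ^ m" if "M \<le> m" "tri m \<le> n" for m n
      using dens_ratio_parity_offspring_odd_tail[OF pr xb, of m n] dens_ratio_le_1[of "parity_offspring T" "stretch x" n]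
        xF par True that
      by (simp add: abs_if)
    then have "?X \<longlonglongrightarrow> 1" by (intro LIMSEQ_geometric_tail_bound) blast
    then show ?thesis unfolding density_is_def by blast
  next
    case False
    have "\<bar>?X n - 0\<bar> \<le> (1/2) ^ m" if "M \<le> m" "tri m \<le> n" for m n
      using dens_ratio_parity_offspring_even_tail[OF xb, of m n] dens_ratio_nonneg[of "parity_offspring T" "stretch x" n]
        xF par False that
      by simp
    then have "?X \<longlonglongrightarrow> 0" by (intro LIMSEQ_geometric_tail_bound) blast
    then show ?thesis unfolding density_is_def by blast
  qed
qed

section \<open>Continuity in the Vietoris topology\<close>

definition flag_point :: "bool list \<Rightarrow> (nat \<Rightarrow> bool)" where
  "flag_point s = lconc (stretch_list s @ (True # replicate (length s) False)) zeros"

lemma flag_point_parity_offspring: "T s \<Longrightarrow> 1 \<le> length s \<Longrightarrow> flag_point s \<in> parity_offspring T"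
  unfolding flag_point_def parity_offspring_def parity_closure_def using True_replicate_False_Fl by fastforce

lemma flag_point_in_cyl: "flag_point s \<in> cyl (stretch_list s)"
  unfolding flag_point_def using lconc_in_cyl[of "stretch_list s @ True # replicate (length s) False" zeros]
  by (simp add: mem_cyl_append_iff)

lemma flag_point_in_cyl_restr:
  assumes "y \<in> cyl (stretch_list s)" "n \<le> length s"
  shows "flag_point s \<in> cyl (restr y n)"
  using cyl_restr_le[OF cyl_stretch_list_restr[OF flag_point_in_cyl assms(1)] assms(2)] .

lemma parity_offspring_meets_cyl_near:
  assumes "y \<in> parity_offspring T0"
  obtains s where "T0 s" "\<And>T. T s \<Longrightarrow> parity_offspring T \<inter> cyl (restr y n) \<noteq> {}"
  using assms
proof (cases rule: parity_offspring_cases)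
  case (branch x)
  let ?s = "restr x (Suc n)"
  have "flag_point ?s \<in> parity_offspring T \<inter> cyl (restr y n)" if "T ?s" for T
    using that branch stretch_in_cyl_stretch_list[of x "Suc n"]
    by (auto intro: flag_point_parity_offspring flag_point_in_cyl_restr)
  then show thesis using that[of ?s] branches_restr[OF branch(1)] by blast
next
  case (flag t a z)
  then have "y \<in> parity_offspring T \<inter> cyl (restr y n)" if "T t" for T
    using that unfolding parity_offspring_def by auto
  then show thesis using that[of t] flag(1) by blast
qed

lemma parity_offspring_near_agreeing:
  assumes pr: "pruned_tree T" and ag: "\<And>s. length s \<le> Suc N \<Longrightarrow> T s = T0 s"
    and y: "y \<in> parity_offspring T"
  shows "\<exists>y0\<in>parity_offspring T0. y \<in> cyl (restr y0 N)"
  using y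
proof (cases rule: parity_offspring_cases)
  case (branch x)
  let ?s = "restr x (Suc N)"
  have "T0 ?s" using ag[of ?s] branches_restr[OF branch(1), of "Suc N"] by simp
  then have "flag_point ?s \<in> parity_offspring T0" by (rule flag_point_parity_offspring) simp
  moreover have "flag_point ?s \<in> cyl (restr y N)"
    using branch stretch_in_cyl_stretch_list[of x "Suc N"] by (intro flag_point_in_cyl_restr) simp_all
  ultimately show ?thesis using mem_cyl_restr_commute by blast
next
  case (flag t a z)
  show ?thesis
  proof (cases "length t \<le> Suc N")
    case True
    then have "T0 t" using ag flag(1) by simp
    then have "y \<in> parity_offspring T0" using flag unfolding parity_offspring_def by blast
    then show ?thesis using in_cyl_restr_self by blast
  next
    case False
    let ?s = "take (Suc N) t"
    have "T0 ?s" using ag[of ?s] pruned_tree_take[OF pr flag(1), of "Suc N"] by simp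
    then have "flag_point ?s \<in> parity_offspring T0" using False by (rule_tac flag_point_parity_offspring) simp_all
    moreover have "flag_point ?s \<in> cyl (restr y N)"
      using flag(5) False by (intro flag_point_in_cyl_restr cyl_stretch_list_take) (simp_all add: mem_cyl_append_iff)
    ultimately show ?thesis using mem_cyl_restr_commute by blast
  qed
qed

lemma openin_PrTr2_hits:
  assumes U: "openin cantor_top U"
  shows "openin PrTr2 {T \<in> topspace PrTr2. parity_offspring T \<inter> U \<noteq> {}}"
proof (rule openin_subopen[THEN iffD2], intro ballI)
  fix T0 assume T0: "T0 \<in> {T \<in> topspace PrTr2. parity_offspring T \<inter> U \<noteq> {}}"
  then obtain y where y: "y \<in> parity_offspring T0" "y \<in> U" by blast
  then obtain n where n: "cyl (restr y n) \<subseteq> U" using U openin_cantor_top_iff by blast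
  obtain s where s: "T0 s" "\<And>T. T s \<Longrightarrow> parity_offspring T \<inter> cyl (restr y n) \<noteq> {}"
    using parity_offspring_meets_cyl_near[OF y(1)] by blast
  let ?W = "{T. pruned_tree T \<and> (\<forall>s'\<in>{s}. T s' = T0 s')}"
  have "openin PrTr2 ?W" by (rule openin_PrTr2_agree) simp
  moreover have "T0 \<in> ?W" using T0 by (simp add: topspace_PrTr2)
  moreover have "?W \<subseteq> {T \<in> topspace PrTr2. parity_offspring T \<inter> U \<noteq> {}}"
    using s n by (fastforce simp: topspace_PrTr2)
  ultimately show "\<exists>W. openin PrTr2 W \<and> T0 \<in> W \<and> W \<subseteq> {T \<in> topspace PrTr2. parity_offspring T \<inter> U \<noteq> {}}"
    by blast
qed

lemma openin_PrTr2_inside: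
  assumes U: "openin cantor_top U"
  shows "openin PrTr2 {T \<in> topspace PrTr2. parity_offspring T \<subseteq> U}"
proof (rule openin_subopen[THEN iffD2], intro ballI)
  fix T0 assume T0: "T0 \<in> {T \<in> topspace PrTr2. parity_offspring T \<subseteq> U}"
  then have pr0: "pruned_tree T0" and sub0: "parity_offspring T0 \<subseteq> U" by (simp_all add: topspace_PrTr2)
  obtain N where N: "\<forall>y\<in>parity_offspring T0. cyl (restr y N) \<subseteq> U"
    using lebesgue_number_cyl[OF compactin_parity_offspring[OF pr0] U sub0] by blast
  let ?F = "{s::bool list. set s \<subseteq> UNIV \<and> length s \<le> Suc N}"
  let ?W = "{T. pruned_tree T \<and> (\<forall>s\<in>?F. T s = T0 s)}"
  have "openin PrTr2 ?W" by (intro openin_PrTr2_agree finite_lists_length_le) simp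
  moreover have "T0 \<in> ?W" using pr0 by simp
  moreover have "?W \<subseteq> {T \<in> topspace PrTr2. parity_offspring T \<subseteq> U}"
    using parity_offspring_near_agreeing[of _ N T0] N by (fastforce simp: topspace_PrTr2)
  ultimately show "\<exists>W. openin PrTr2 W \<and> T0 \<in> W \<and> W \<subseteq> {T \<in> topspace PrTr2. parity_offspring T \<subseteq> U}"
    by blast
qed

lemma continuous_map_vietorisI:
  assumes compact: "\<And>x. x \<in> topspace X \<Longrightarrow> compactin cantor_top (F x)"
    and inside: "\<And>U. openin cantor_top U \<Longrightarrow> openin X {x \<in> topspace X. F x \<subseteq> U}"
    and hits: "\<And>U. openin cantor_top U \<Longrightarrow> openin X {x \<in> topspace X. F x \<inter> U \<noteq> {}}"
  shows "continuous_map X vietoris F"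
  unfolding vietoris_def continuous_map_in_subtopology
proof
  let ?S = "{{K. K \<subseteq> U} | U. openin cantor_top U} \<union> {{K. K \<inter> U \<noteq> {}} | U. openin cantor_top U}"
  show "continuous_map X (topology_generated_by ?S) F"
  proof (rule continuous_on_generated_topo)
    fix V assume "V \<in> ?S"
    then consider (up) U where "openin cantor_top U" "V = {K. K \<subseteq> U}"
      | (lo) U where "openin cantor_top U" "V = {K. K \<inter> U \<noteq> {}}"
      by (elim UnE CollectE exE conjE) blast+
    then show "openin X (F -` V \<inter> topspace X)"
    proof cases
      case up
      have "F -` V \<inter> topspace X = {x \<in> topspace X. F x \<subseteq> U}" using up(2) by blast
      then show ?thesis using inside[OF up(1)] by simp
    next
      case lo
      have "F -` V \<inter> topspace X = {x \<in> topspace X. F x \<inter> U \<noteq> {}}" using lo(2) by blast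
      then show ?thesis using hits[OF lo(1)] by simp
    qed
  next
    have "openin cantor_top UNIV" using openin_topspace[of cantor_top] by simp
    then have u: "{K. K \<subseteq> UNIV} \<in> ?S" by (intro UnI1 CollectI exI[of _ UNIV]) simp
    show "F ` topspace X \<subseteq> \<Union> ?S"
    proof
      fix K assume "K \<in> F ` topspace X"
      show "K \<in> \<Union> ?S" by (rule UnionI[OF u]) simp
    qed
  qed
  show "F \<in> topspace X \<rightarrow> {K. compactin cantor_top K}" using compact by (simp add: Pi_iff)
qed

lemma continuous_map_parity_offspring: "continuous_map PrTr2 vietoris parity_offspring"
proof (rule continuous_map_vietorisI)
  fix T assume "T \<in> topspace PrTr2"
  then show "compactin cantor_top (parity_offspring T)"
    by (simp add: topspace_PrTr2 compactin_parity_offspring)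
qed (fact openin_PrTr2_inside openin_PrTr2_hits)+

theorem theorem4p2:
  shows "\<exists>G. continuous_map PrTr2 vietoris G \<and>
    (\<forall>T. pruned_tree T \<longrightarrow>
       (\<exists>D. compliant T D \<and> G T = closed_offspring T D) \<and>
       (\<forall>x\<in>branches T.
          (x \<in> NN \<longrightarrow> osc (G T) (stretch x) = 1) \<and>
          (x \<notin> NN \<longrightarrow> (\<exists>d\<in>{0,1}. density_is (G T) (stretch x) d))))"
proof (intro exI[of _ parity_offspring] conjI allI impI ballI)
  show "continuous_map PrTr2 vietoris parity_offspring" by (rule continuous_map_parity_offspring)
next
  fix T assume "pruned_tree T"
  show "\<exists>D. compliant T D \<and> parity_offspring T = closed_offspring T D"
    using compliant_parity_set closed_offspring_parity_set by metis
next
  fix T x assume "pruned_tree T" "x \<in> branches T" "x \<in> NN"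
  then show "osc (parity_offspring T) (stretch x) = 1" by (rule osc_parity_offspring_infinite_ones)
next
  fix T x assume "pruned_tree T" "x \<in> branches T" "x \<notin> NN"
  then show "\<exists>d\<in>{0,1}. density_is (parity_offspring T) (stretch x) d" by (rule density_parity_offspring_finite_ones)
qed

end
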